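(* We have \[ \left(\frac{\Gamma(1/4)}{\Gamma(3/4)}\right)^4=80-\frac{2048}{625}\sum_{n\ge0}\frac{(n+1)\,(3/4)_n^4}{(9/4)_n^4} \quad\text{and}\quad \left(\frac{\Gamma(3/4)}{\Gamma(1/4)}\right)^4=\frac1{16}-\frac{4}{81}\sum_{n\ge0}\frac{(2n+1)\,(1/4)_n^4}{(7/4)_n^4}. \]
   Context: $(a)_n=a(a+1)\cdots(a+n-1)$ denotes the rising Pochhammer symbol, $(a)_0=1$. *)

theory Defs
  imports "HOL-Analysis.Analysis"
begin

end

theory Submission imports Defs begin

text \<open>Both series telescope. With \<open>r n = (a)\<^sub>n / (b)\<^sub>n\<close> and a suitable quadratic \<open>P\<close>,
  the summand is a constant multiple of \<open>Q n - Q (n + 1)\<close> where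
  \<open>Q n = P n (n + b - 1)\<^sup>4 r n\<^sup>4\<close>; this is a polynomial identity in \<open>n\<close> once
  \<open>r (n + 1) = r n (n + a) / (n + b)\<close> is used. Since \<open>b - a = 3/2\<close>, the Gamma-function asymptotics
  \<open>r n \<sim> (\<Gamma>(b) / \<Gamma>(a)) n\<^bsup>a - b\<^esup>\<close> give \<open>Q n \<longrightarrow> (\<Gamma>(b) / \<Gamma>(a))\<^sup>4\<close>, so each sum equals
  \<open>Q 0\<close> minus this limit, and the functional equation of \<open>\<Gamma>\<close> reduces the limits to the
  quotients in the statement.\<close>

lemma pochhammer_quotient_powr_tendsto:
  fixes a b :: real
  assumes a: "a > 0" and b: "b > 0"
  shows "(\<lambda>n. pochhammer a n / pochhammer b n * real n powr (b - a)) \<longlonglongrightarrow> Gamma b / Gamma a"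
proof -
  have "(\<lambda>n. Gamma_series' b n / Gamma_series' a n) \<longlonglongrightarrow> Gamma b / Gamma a"
    using Gamma_real_pos[OF a] by (intro tendsto_intros Gamma_series'_LIMSEQ) auto
  moreover have "eventually (\<lambda>n. Gamma_series' b n / Gamma_series' a n
      = pochhammer a n / pochhammer b n * real n powr (b - a)) sequentially"
    using eventually_gt_at_top[of 0]
  proof eventually_elim
    case (elim n)
    have "pochhammer a n > 0" "pochhammer b n > 0"
      using a b by (simp_all add: pochhammer_pos)
    moreover have "real n powr (b - a) = exp (b * ln (real n)) / exp (a * ln (real n))"
      using elim by (simp add: powr_def exp_diff[symmetric] algebra_simps)
    ultimately show ?case
      by (simp add: Gamma_series'_def field_simps)
  qed
  ultimately show ?thesis
    by (rule Lim_transform_eventually)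
qed

lemma pochhammer_quotient_power_tendsto:
  fixes a b :: real and f :: "nat \<Rightarrow> real"
  assumes a: "a > 0" and b: "b > 0"
    and f: "(\<lambda>n. f n / real n powr (real m * (b - a))) \<longlonglongrightarrow> 1"
  shows "(\<lambda>n. f n * (pochhammer a n / pochhammer b n) ^ m) \<longlonglongrightarrow> (Gamma b / Gamma a) ^ m"
proof -
  have "(\<lambda>n. f n / real n powr (real m * (b - a))
        * (pochhammer a n / pochhammer b n * real n powr (b - a)) ^ m)
      \<longlonglongrightarrow> 1 * (Gamma b / Gamma a) ^ m"
    by (intro tendsto_intros f pochhammer_quotient_powr_tendsto a b)
  moreover have "eventually (\<lambda>n. f n / real n powr (real m * (b - a))
        * (pochhammer a n / pochhammer b n * real n powr (b - a)) ^ m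
      = f n * (pochhammer a n / pochhammer b n) ^ m) sequentially"
    using eventually_gt_at_top[of 0]
  proof eventually_elim
    case (elim n)
    have "(pochhammer a n / pochhammer b n * real n powr (b - a)) ^ m
        = (pochhammer a n / pochhammer b n) ^ m * real n powr (real m * (b - a))"
      using elim by (subst power_mult_distrib) (simp add: powr_power)
    moreover have "real n powr (real m * (b - a)) \<noteq> 0"
      using elim by simp
    ultimately show ?case
      by simp
  qed
  ultimately show ?thesis
    by (simp add: Lim_transform_eventually)
qed

definition pochhammer_antidifference :: "(real \<Rightarrow> real) \<Rightarrow> real \<Rightarrow> real \<Rightarrow> nat \<Rightarrow> real" where
  "pochhammer_antidifference P a b n =
     P (real n) * (real n + b - 1) ^ 4 * (pochhammer a n / pochhammer b n) ^ 4"

lemma pochhammer_antidifference_diff: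
  fixes a b :: real
  assumes "b > 0"
  shows "pochhammer_antidifference P a b n - pochhammer_antidifference P a b (Suc n)
    = (P (real n) * (real n + b - 1) ^ 4 - P (real n + 1) * (real n + a) ^ 4)
      * (pochhammer a n / pochhammer b n) ^ 4"
proof -
  have "real n + b \<noteq> 0"
    using assms of_nat_0_le_iff[of n] by linarith
  moreover have "pochhammer a (Suc n) / pochhammer b (Suc n)
      = pochhammer a n / pochhammer b n * ((real n + a) / (real n + b))"
    by (simp add: pochhammer_Suc add.commute)
  ultimately have "(real n + 1 + b - 1) ^ 4 * (pochhammer a (Suc n) / pochhammer b (Suc n)) ^ 4
      = (real n + a) ^ 4 * (pochhammer a n / pochhammer b n) ^ 4"
    by (simp add: power_mult_distrib power_divide)
  then show ?thesis
    by (simp add: pochhammer_antidifference_def algebra_simps)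
qed

lemma pochhammer_antidifference_tendsto:
  fixes a b u v :: real
  assumes "a > 0" "b > 0" "b - a = 3/2"
  shows "pochhammer_antidifference (\<lambda>x. x\<^sup>2 + u * x + v) a b \<longlonglongrightarrow> (Gamma b / Gamma a) ^ 4"
  unfolding pochhammer_antidifference_def
proof (rule pochhammer_quotient_power_tendsto)
  have "(\<lambda>n. (1 + u * inverse (real n) + v * inverse (real n) ^ 2)
        * (1 + (b - 1) * inverse (real n)) ^ 4) \<longlonglongrightarrow> (1 + u * 0 + v * 0 ^ 2) * (1 + (b - 1) * 0) ^ 4"
    by (intro tendsto_intros tendsto_inverse_0_at_top filterlim_real_sequentially)
  moreover have "eventually (\<lambda>n. (1 + u * inverse (real n) + v * inverse (real n) ^ 2)
        * (1 + (b - 1) * inverse (real n)) ^ 4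
      = ((real n)\<^sup>2 + u * real n + v) * (real n + b - 1) ^ 4 / real n powr (real 4 * (b - a)))
      sequentially"
    using eventually_gt_at_top[of 0]
  proof eventually_elim
    case (elim n)
    define x where "x = real n"
    have x: "x > 0"
      using elim by (simp add: x_def)
    have "1 + u * inverse x + v * inverse x ^ 2 = (x\<^sup>2 + u * x + v) / x\<^sup>2"
      using x by (simp add: field_simps power2_eq_square)
    moreover have "1 + (b - 1) * inverse x = (x + b - 1) / x"
      using x by (simp add: field_simps)
    moreover have "x powr (real 4 * (b - a)) = x\<^sup>2 * x ^ 4"
      using x powr_realpow[of x 6] by (simp add: assms(3))
    ultimately show ?case
      unfolding x_def[symmetric] by (simp only: power_divide times_divide_times_eq)
  qed
  ultimately show "(\<lambda>n. ((real n)\<^sup>2 + u * real n + v) * (real n + b - 1) ^ 4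
      / real n powr (real 4 * (b - a))) \<longlonglongrightarrow> 1"
    using Lim_transform_eventually by fastforce
qed (use assms in auto)

lemma pochhammer_antidifference_sums:
  fixes a b u v :: real
  assumes "a > 0" "b > 0" "b - a = 3/2"
  shows "(\<lambda>n. (((real n)\<^sup>2 + u * real n + v) * (real n + b - 1) ^ 4
        - ((real n + 1)\<^sup>2 + u * (real n + 1) + v) * (real n + a) ^ 4)
        * (pochhammer a n / pochhammer b n) ^ 4)
    sums (v * (b - 1) ^ 4 - (Gamma b / Gamma a) ^ 4)"
proof -
  let ?Q = "pochhammer_antidifference (\<lambda>x. x\<^sup>2 + u * x + v) a b"
  have "(\<lambda>n. ?Q n - ?Q (Suc n)) sums (?Q 0 - (Gamma b / Gamma a) ^ 4)"
    by (intro telescope_sums' pochhammer_antidifference_tendsto assms)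
  moreover have "?Q 0 = v * (b - 1) ^ 4"
    by (simp add: pochhammer_antidifference_def)
  ultimately show ?thesis
    by (simp only: pochhammer_antidifference_diff[OF assms(2)])
qed

lemma Gamma_real_plus1:
  fixes x :: real
  assumes "x > 0"
  shows "Gamma (x + 1) = x * Gamma x"
  using assms by (intro Gamma_plus1) (auto elim: nonpos_Ints_cases)

lemma Gamma_nine_quarters: "Gamma (9/4 :: real) = 5/16 * Gamma (1/4)"
  using Gamma_real_plus1[of "5/4"] Gamma_real_plus1[of "1/4"] by simp

lemma Gamma_seven_quarters: "Gamma (7/4 :: real) = 3/4 * Gamma (3/4)"
  using Gamma_real_plus1[of "3/4"] by simp

lemma first_series_sums:
  "(\<lambda>n. real (n + 1) * pochhammer (3/4::real) n ^ 4 / pochhammer (9/4) n ^ 4)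
    sums (625/2048 * (80 - (Gamma (1/4) / Gamma (3/4)) ^ 4))"
proof -
  have identity: "(x\<^sup>2 + 1 * x + 5/16) * (x + 9/4 - 1) ^ 4
      - ((x + 1)\<^sup>2 + 1 * (x + 1) + 5/16) * (x + 3/4) ^ 4
      = (x + 1) / 32" for x :: real
    by (simp add: field_simps power2_eq_square) algebra
  have telescoped: "(\<lambda>n. (real n + 1) / 32 * (pochhammer (3/4) n / pochhammer (9/4) n) ^ 4)
      sums (5/16 * (9/4 - 1) ^ 4 - (Gamma (9/4) / Gamma (3/4)) ^ 4)"
    using pochhammer_antidifference_sums[of "3/4" "9/4" 1 "5/16"] by (simp only: identity)
  have closed_form: "32 * (5/16 * (9/4 - 1) ^ 4 - (Gamma (9/4) / Gamma (3/4)) ^ 4)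
      = 625/2048 * (80 - (Gamma (1/4) / Gamma (3/4 :: real)) ^ 4)"
    by (simp add: Gamma_nine_quarters power_divide power_mult_distrib)
  have "(\<lambda>n. real (n + 1) * pochhammer (3/4::real) n ^ 4 / pochhammer (9/4) n ^ 4)
      = (\<lambda>n. 32 * ((real n + 1) / 32 * (pochhammer (3/4) n / pochhammer (9/4) n) ^ 4))"
    by (simp add: power_divide add.commute)
  then show ?thesis
    using sums_mult[OF telescoped, of 32] by (simp only: closed_form)
qed

lemma second_series_sums:
  "(\<lambda>n. real (2 * n + 1) * pochhammer (1/4::real) n ^ 4 / pochhammer (7/4) n ^ 4)
    sums (81/4 * (1/16 - (Gamma (3/4) / Gamma (1/4)) ^ 4))"
proof -
  have identity: "(x\<^sup>2 + 0 * x + 1/16) * (x + 7/4 - 1) ^ 4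
      - ((x + 1)\<^sup>2 + 0 * (x + 1) + 1/16) * (x + 1/4) ^ 4
      = (2 * x + 1) / 64" for x :: real
    by (simp add: field_simps power2_eq_square) algebra
  have telescoped: "(\<lambda>n. (2 * real n + 1) / 64 * (pochhammer (1/4) n / pochhammer (7/4) n) ^ 4)
      sums (1/16 * (7/4 - 1) ^ 4 - (Gamma (7/4) / Gamma (1/4)) ^ 4)"
    using pochhammer_antidifference_sums[of "1/4" "7/4" 0 "1/16"] by (simp only: identity)
  have closed_form: "64 * (1/16 * (7/4 - 1) ^ 4 - (Gamma (7/4) / Gamma (1/4)) ^ 4)
      = 81/4 * (1/16 - (Gamma (3/4) / Gamma (1/4 :: real)) ^ 4)"
    by (simp add: Gamma_seven_quarters power_divide power_mult_distrib)
  have "(\<lambda>n. real (2 * n + 1) * pochhammer (1/4::real) n ^ 4 / pochhammer (7/4) n ^ 4)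
      = (\<lambda>n. 64 * ((2 * real n + 1) / 64 * (pochhammer (1/4) n / pochhammer (7/4) n) ^ 4))"
    by (simp add: power_divide add.commute)
  then show ?thesis
    using sums_mult[OF telescoped, of 64] by (simp only: closed_form)
qed

theorem mainTheorem3:
  shows "summable (\<lambda>n. real (n + 1) * pochhammer (3/4::real) n ^ 4 / pochhammer (9/4) n ^ 4)
       \<and> (Gamma (1/4) / Gamma (3/4::real)) ^ 4
           = 80 - 2048/625 * (\<Sum>n. real (n + 1) * pochhammer (3/4::real) n ^ 4 / pochhammer (9/4) n ^ 4)
       \<and> summable (\<lambda>n. real (2 * n + 1) * pochhammer (1/4::real) n ^ 4 / pochhammer (7/4) n ^ 4)
       \<and> (Gamma (3/4) / Gamma (1/4::real)) ^ 4
           = 1/16 - 4/81 * (\<Sum>n. real (2 * n + 1) * pochhammer (1/4::real) n ^ 4 / pochhammer (7/4) n ^ 4)"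
  using sums_summable[OF first_series_sums] sums_unique[OF first_series_sums]
    sums_summable[OF second_series_sums] sums_unique[OF second_series_sums]
  by simp

end
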